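(* Let the weights be $a_j=1/j$. (i) For fixed $n\ge1$ and $k\to\infty$, $k-S_{n,k}$ converges in distribution to $D_n=B_1+B_2+\cdots+B_n$, where $B_j$ are independent Bernoulli random variables with $\mathbb P\{B_j=1\}=1/j$; the law of $D_n$ is $\mathbb P\{D_n=\ell\}=\zeta_{n-1}(\{1\}_{\ell-1})/n$ for $1\le\ell\le n$. (ii) For fixed $k\ge1$ and $n\to\infty$, $S_{n,k}\to0$ in distribution.
   Context: For $\vec\ell=(\ell_1,\dots,\ell_k)$ with $n\ge\ell_1\ge\cdots\ge\ell_k\ge1$ let $\sigma(\vec\ell)=|\{1\le j\le k-1:\ell_j=\ell_{j+1}\}|$, and $\theta_{n;k}(t)=\sum_{n\ge\ell_1\ge\cdots\ge\ell_k\ge1}t^{\sigma(\vec\ell)}\prod_i\ell_i^{-1}$. $S_{n,k}$ is the random variable with $\mathbb P\{S_{n,k}=j\}=[t^j]\theta_{n;k}(t)/\theta_{n;k}(1)$. $\zeta_{m}(\{1\}_r)=\sum_{m\ge\ell_1>\cdots>\ell_r\ge1}\prod_i\ell_i^{-1}$, with $\zeta_m(\{1\}_0)=1$ (also for $m=0$). *)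

theory Defs
  imports "HOL-Probability.Probability"
begin

definition wseqs :: "nat \<Rightarrow> nat \<Rightarrow> nat list set" where
  "wseqs n k = {ls. length ls = k \<and> sorted_wrt (\<ge>) ls \<and> set ls \<subseteq> {1..n}}"

definition sseqs :: "nat \<Rightarrow> nat \<Rightarrow> nat list set" where
  "sseqs m r = {ls. length ls = r \<and> sorted_wrt (>) ls \<and> set ls \<subseteq> {1..m}}"

definition sigma :: "nat list \<Rightarrow> nat" where
  "sigma ls = card {j. Suc j < length ls \<and> ls ! j = ls ! Suc j}"

definition wt :: "nat list \<Rightarrow> real" where
  "wt ls = (\<Prod>l\<leftarrow>ls. 1 / real l)"

definition theta :: "nat \<Rightarrow> nat \<Rightarrow> real \<Rightarrow> real" where
  "theta n k t = (\<Sum>ls\<in>wseqs n k. t ^ sigma ls * wt ls)"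

definition theta_coeff :: "nat \<Rightarrow> nat \<Rightarrow> nat \<Rightarrow> real" where
  "theta_coeff n k j = (\<Sum>ls\<in>{ls\<in>wseqs n k. sigma ls = j}. wt ls)"

definition S_pmf :: "nat \<Rightarrow> nat \<Rightarrow> nat pmf" where
  "S_pmf n k = embed_pmf (\<lambda>j. theta_coeff n k j / theta n k 1)"

definition zeta1 :: "nat \<Rightarrow> nat \<Rightarrow> real" where
  "zeta1 m r = (\<Sum>ls\<in>sseqs m r. wt ls)"

primrec D_pmf :: "nat \<Rightarrow> nat pmf" where
  "D_pmf 0 = return_pmf 0"
| "D_pmf (Suc n) = do { s \<leftarrow> D_pmf n; b \<leftarrow> bernoulli_pmf (1 / real (Suc n)); return_pmf (s + of_bool b) }"

end

theory Submission
  imports Defs "HOL-Analysis.Harmonic_Numbers"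
begin

text \<open>
  Sorting the sequences by whether \<open>\<ell>_1 = n\<close> and removing that first entry gives recursions
  in \<open>n\<close> and \<open>k\<close> for the total weight \<open>\<theta>_{n;k}(1)\<close> and for the weight of the sequences
  with exactly \<open>d\<close> distinct entries, i.e. with \<open>k - S_{n,k} = d\<close>. For fixed \<open>n\<close> they are
  affine recursions in \<open>k\<close> with contraction factor \<open>1/n\<close>, so by induction on \<open>n\<close> the limits
  as \<open>k \<rightarrow> \<infinity>\<close> exist and satisfy the recursions of \<open>n\<close> and of \<open>\<zeta>_{n-1}({1}_{d-1})\<close>;
  the latter is also the recursion of \<open>n P{D_n = d}\<close>.
  For fixed \<open>k\<close> the total weight is at least \<open>H_n^k / k!\<close>, while the weight of the sequences
  with a repeated entry is at most \<open>k H_n^(k-1)\<close>; since \<open>H_n \<rightarrow> \<infinity>\<close>, \<open>S_{n,k} = 0\<close> with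
  probability tending to \<open>1\<close>.
\<close>

section \<open>Decreasing sequences\<close>

lemma wseqs_0 [simp]: "wseqs n 0 = {[]}"
  by (auto simp: wseqs_def)

lemma wseqs_0_Suc [simp]: "wseqs 0 (Suc k) = {}"
  by (auto simp: wseqs_def length_Suc_conv)

lemma finite_wseqs [simp]: "finite (wseqs n k)"
proof -
  have "wseqs n k \<subseteq> {xs. set xs \<subseteq> {1..n} \<and> length xs = k}"
    by (auto simp: wseqs_def)
  thus ?thesis
    by (rule finite_subset) (rule finite_lists_length_eq, simp)
qed

lemma wseqs_mono: "wseqs n k \<subseteq> wseqs (Suc n) k"
  by (auto simp: wseqs_def)

lemma Cons_in_wseqs_iff:
  "x # ls \<in> wseqs n (Suc k) \<longleftrightarrow> ls \<in> wseqs n k \<and> 1 \<le> x \<and> x \<le> n \<and> (\<forall>y\<in>set ls. y \<le> x)"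
  by (auto simp: wseqs_def)

lemma wseqs_Suc_diff: "wseqs (Suc n) (Suc k) - wseqs n (Suc k) = Cons (Suc n) ` wseqs (Suc n) k"
proof safe
  fix ls assume ls_in: "ls \<in> wseqs (Suc n) (Suc k)" and ls_notin: "ls \<notin> wseqs n (Suc k)"
  then obtain x rs where ls: "ls = x # rs"
    by (cases ls) (auto simp: wseqs_def)
  from ls_in ls have rs: "rs \<in> wseqs (Suc n) k" and x: "1 \<le> x" "x \<le> Suc n"
    and le: "\<forall>y\<in>set rs. y \<le> x"
    by (auto simp: Cons_in_wseqs_iff)
  have "x = Suc n"
  proof (rule ccontr)
    assume "x \<noteq> Suc n"
    with x have "x \<le> n" by simp
    with rs le have "ls \<in> wseqs n (Suc k)"
      unfolding ls Cons_in_wseqs_iff using x by (force simp: wseqs_def)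
    with ls_notin show False by simp
  qed
  with ls rs show "ls \<in> Cons (Suc n) ` wseqs (Suc n) k" by simp
qed (auto simp: wseqs_def)

lemma sum_wseqs_Suc_Suc:
  "(\<Sum>ls\<in>wseqs (Suc n) (Suc k). g ls) =
     (\<Sum>ls\<in>wseqs n (Suc k). g ls) + (\<Sum>ls\<in>wseqs (Suc n) k. g (Suc n # ls))"
proof -
  have "(\<Sum>ls\<in>wseqs (Suc n) (Suc k). g ls) =
      (\<Sum>ls\<in>wseqs n (Suc k). g ls) + (\<Sum>ls\<in>wseqs (Suc n) (Suc k) - wseqs n (Suc k). g ls)"
    using wseqs_mono[of n "Suc k"] by (simp add: sum.subset_diff add.commute)
  also have "(\<Sum>ls\<in>wseqs (Suc n) (Suc k) - wseqs n (Suc k). g ls) =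
      (\<Sum>ls\<in>wseqs (Suc n) k. g (Suc n # ls))"
    unfolding wseqs_Suc_diff by (subst sum.reindex) (auto simp: inj_on_def)
  finally show ?thesis .
qed

lemma sum_wseqs_Suc:
  "(\<Sum>ls\<in>wseqs (Suc n) k. g ls) =
     (\<Sum>ls\<in>wseqs n k. g ls) + (\<Sum>ls\<in>wseqs (Suc n) k - wseqs n k. g ls)"
  using wseqs_mono[of n k] by (simp add: sum.subset_diff add.commute)

lemma hd_wseqs_Suc_diff: "ls \<in> wseqs (Suc n) k - wseqs n k \<Longrightarrow> ls \<noteq> [] \<and> hd ls = Suc n"
  by (cases k) (auto simp: wseqs_Suc_diff)

lemma hd_wseqs_neq_Suc: "ls \<in> wseqs n k \<Longrightarrow> ls \<noteq> [] \<Longrightarrow> hd ls \<noteq> Suc n"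
  by (cases ls) (auto simp: wseqs_def)

lemma sigma_Nil [simp]: "sigma [] = 0"
  by (simp add: sigma_def)

lemma sigma_Cons: "sigma (x # ls) = sigma ls + (if ls \<noteq> [] \<and> hd ls = x then 1 else 0)"
proof -
  let ?J = "\<lambda>ls. {j. Suc j < length ls \<and> ls ! j = ls ! Suc j}"
  have eq: "?J (x # ls) = (if ls \<noteq> [] \<and> hd ls = x then {0} else {}) \<union> Suc ` ?J ls"
  proof (cases ls)
    case (Cons y ys)
    show ?thesis
    proof (intro set_eqI)
      fix j show "j \<in> ?J (x # ls) \<longleftrightarrow>
          j \<in> (if ls \<noteq> [] \<and> hd ls = x then {0} else {}) \<union> Suc ` ?J ls"
        unfolding Cons by (cases j) (auto simp: inj_image_mem_iff)
    qed
  qed simp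
  have "finite (?J ls)"
    by (rule finite_subset[of _ "{..<length ls}"]) auto
  thus ?thesis
    unfolding sigma_def eq by (subst card_Un_disjoint) (auto simp: card_image)
qed

lemma sigma_le_length: "sigma ls \<le> length ls"
proof -
  have "{j. Suc j < length ls \<and> ls ! j = ls ! Suc j} \<subseteq> {..<length ls}" by auto
  thus ?thesis
    unfolding sigma_def by (metis card_lessThan card_mono finite_lessThan)
qed

lemma sigma_le_if_wseqs: "ls \<in> wseqs n k \<Longrightarrow> sigma ls \<le> k"
  using sigma_le_length[of ls] by (simp add: wseqs_def)

lemma sigma_Cons_Suc_low: "ls \<in> wseqs n k \<Longrightarrow> sigma (Suc n # ls) = sigma ls"
  using hd_wseqs_neq_Suc by (auto simp: sigma_Cons)

lemma sigma_Cons_Suc_top: "ls \<in> wseqs (Suc n) k - wseqs n k \<Longrightarrow> sigma (Suc n # ls) = Suc (sigma ls)"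
  using hd_wseqs_Suc_diff by (simp add: sigma_Cons)

lemma wt_Nil [simp]: "wt [] = 1"
  by (simp add: wt_def)

lemma wt_Cons [simp]: "wt (x # ls) = wt ls / real x"
  by (simp add: wt_def)

lemma wt_pos: "set ls \<subseteq> {1..n} \<Longrightarrow> wt ls > 0"
  by (induction ls) auto

lemma wt_pos_if_wseqs: "ls \<in> wseqs n k \<Longrightarrow> wt ls > 0"
  unfolding wseqs_def using wt_pos by blast

lemma sseqs_0 [simp]: "sseqs m 0 = {[]}"
  by (auto simp: sseqs_def)

lemma sseqs_0_Suc [simp]: "sseqs 0 (Suc r) = {}"
  by (auto simp: sseqs_def length_Suc_conv)

lemma finite_sseqs [simp]: "finite (sseqs n k)"
proof -
  have "sseqs n k \<subseteq> {xs. set xs \<subseteq> {1..n} \<and> length xs = k}"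
    by (auto simp: sseqs_def)
  thus ?thesis
    by (rule finite_subset) (rule finite_lists_length_eq, simp)
qed

lemma sseqs_mono: "sseqs n k \<subseteq> sseqs (Suc n) k"
  by (auto simp: sseqs_def)

lemma sseqs_Suc_diff: "sseqs (Suc n) (Suc k) - sseqs n (Suc k) = Cons (Suc n) ` sseqs n k"
proof safe
  fix ls assume ls_in: "ls \<in> sseqs (Suc n) (Suc k)" and ls_notin: "ls \<notin> sseqs n (Suc k)"
  then obtain x rs where ls: "ls = x # rs"
    by (cases ls) (auto simp: sseqs_def)
  from ls_in ls have rs: "length rs = k" "sorted_wrt (>) rs" "set rs \<subseteq> {1..Suc n}"
    and x: "1 \<le> x" "x \<le> Suc n" and less: "\<forall>y\<in>set rs. y < x"
    by (auto simp: sseqs_def)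
  have rs_le: "set rs \<subseteq> {1..n}"
    using rs less x by force
  have "x = Suc n"
  proof (rule ccontr)
    assume "x \<noteq> Suc n"
    with x rs rs_le less have "ls \<in> sseqs n (Suc k)"
      by (auto simp: ls sseqs_def)
    with ls_notin show False by simp
  qed
  with ls rs rs_le show "ls \<in> Cons (Suc n) ` sseqs n k"
    by (auto simp: sseqs_def)
qed (auto simp: sseqs_def)

lemma zeta1_0 [simp]: "zeta1 m 0 = 1"
  by (simp add: zeta1_def)

lemma zeta1_0_Suc [simp]: "zeta1 0 (Suc r) = 0"
  by (simp add: zeta1_def)

lemma zeta1_Suc_Suc: "zeta1 (Suc m) (Suc r) = zeta1 m (Suc r) + zeta1 m r / real (Suc m)"
proof -
  have "zeta1 (Suc m) (Suc r) =
      zeta1 m (Suc r) + (\<Sum>ls\<in>sseqs (Suc m) (Suc r) - sseqs m (Suc r). wt ls)"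
    unfolding zeta1_def using sseqs_mono[of m "Suc r"] by (simp add: sum.subset_diff add.commute)
  also have "(\<Sum>ls\<in>sseqs (Suc m) (Suc r) - sseqs m (Suc r). wt ls) =
      (\<Sum>ls\<in>sseqs m r. wt ls / real (Suc m))"
    unfolding sseqs_Suc_diff by (subst sum.reindex) (auto simp: inj_on_def)
  also have "\<dots> = zeta1 m r / real (Suc m)"
    unfolding zeta1_def by (simp add: sum_divide_distrib)
  finally show ?thesis .
qed

text \<open>\<open>zeta1_shift (n - 1) d\<close> is the numerator \<open>\<zeta>_{n-1}({1}_{d-1})\<close> of \<open>P{D_n = d}\<close>,
  extended by \<open>0\<close> at \<open>d = 0\<close>.\<close>

definition zeta1_shift :: "nat \<Rightarrow> nat \<Rightarrow> real" where
  "zeta1_shift n d = (if d = 0 then 0 else zeta1 n (d - 1))"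

lemma zeta1_shift_0: "zeta1_shift 0 d = (if d = 1 then 1 else 0)"
  by (cases d) (auto simp: zeta1_shift_def gr0_conv_Suc)

lemma zeta1_shift_Suc:
  "zeta1_shift (Suc n) d = zeta1_shift n d + (if d = 0 then 0 else zeta1_shift n (d - 1)) / real (Suc n)"
proof (cases d)
  case (Suc d')
  thus ?thesis
    by (cases d') (simp_all add: zeta1_shift_def zeta1_Suc_Suc)
qed (simp add: zeta1_shift_def)

section \<open>Weights of decreasing sequences\<close>

definition mass :: "nat \<Rightarrow> nat \<Rightarrow> real" where
  "mass n k = (\<Sum>ls\<in>wseqs n k. wt ls)"

text \<open>\<open>k - \<sigma>(\<ell>)\<close> is the number of distinct entries of \<open>\<ell>\<close>, so \<open>distinct_mass n k d\<close> is the
  weight of the sequences with \<open>d\<close> distinct entries and \<open>top_distinct_mass\<close> its part carried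
  by the sequences with \<open>\<ell>_1 = n + 1\<close>.\<close>

definition distinct_mass :: "nat \<Rightarrow> nat \<Rightarrow> nat \<Rightarrow> real" where
  "distinct_mass n k d = (\<Sum>ls\<in>wseqs n k. if sigma ls + d = k then wt ls else 0)"

definition top_distinct_mass :: "nat \<Rightarrow> nat \<Rightarrow> nat \<Rightarrow> real" where
  "top_distinct_mass n k d =
     (\<Sum>ls\<in>wseqs (Suc n) k - wseqs n k. if sigma ls + d = k then wt ls else 0)"

definition repeat_mass :: "nat \<Rightarrow> nat \<Rightarrow> real" where
  "repeat_mass n k = (\<Sum>ls\<in>wseqs n k. if sigma ls = 0 then 0 else wt ls)"

lemma theta_1: "theta n k 1 = mass n k"
  by (simp add: theta_def mass_def)

lemma mass_nonneg: "mass n k \<ge> 0"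
  unfolding mass_def by (intro sum_nonneg) (auto dest: wt_pos_if_wseqs intro: less_imp_le)

lemma mass_0_right [simp]: "mass n 0 = 1"
  by (simp add: mass_def)

lemma mass_0_Suc [simp]: "mass 0 (Suc k) = 0"
  by (simp add: mass_def)

lemma mass_Suc_Suc: "mass (Suc n) (Suc k) = mass n (Suc k) + mass (Suc n) k / real (Suc n)"
  unfolding mass_def by (simp add: sum_wseqs_Suc_Suc sum_divide_distrib)

lemma mass_Suc: "mass (Suc n) k = mass n k + (\<Sum>ls\<in>wseqs (Suc n) k - wseqs n k. wt ls)"
  unfolding mass_def by (rule sum_wseqs_Suc)

lemma mass_mono: "mass n k \<le> mass (Suc n) k"
proof -
  have "0 \<le> (\<Sum>ls\<in>wseqs (Suc n) k - wseqs n k. wt ls)"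
    by (rule sum_nonneg) (auto intro: less_imp_le wt_pos_if_wseqs)
  thus ?thesis
    unfolding mass_Suc by simp
qed

lemma mass_1: "mass (Suc 0) k = 1"
  by (induction k) (simp_all add: mass_Suc_Suc)

lemma mass_eq_distinct_mass_plus_repeat_mass: "mass n k = distinct_mass n k k + repeat_mass n k"
  unfolding mass_def distinct_mass_def repeat_mass_def
  by (subst sum.distrib[symmetric]) (rule sum.cong, auto)

lemma distinct_mass_0: "distinct_mass 0 k d = (if k = 0 \<and> d = 0 then 1 else 0)"
  by (cases k) (simp_all add: distinct_mass_def)

lemma distinct_mass_Suc: "distinct_mass (Suc n) k d = distinct_mass n k d + top_distinct_mass n k d"
  unfolding distinct_mass_def top_distinct_mass_def by (rule sum_wseqs_Suc)

lemma top_distinct_mass_0_right [simp]: "top_distinct_mass n 0 d = 0"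
  by (simp add: top_distinct_mass_def)

lemma top_distinct_mass_Suc:
  "top_distinct_mass n (Suc k) d =
     (top_distinct_mass n k d + (if d = 0 then 0 else distinct_mass n k (d - 1))) / real (Suc n)"
proof -
  let ?g = "\<lambda>ls. if sigma (Suc n # ls) + d = Suc k then wt ls / real (Suc n) else 0"
  have "top_distinct_mass n (Suc k) d = (\<Sum>ls\<in>wseqs (Suc n) k. ?g ls)"
    unfolding top_distinct_mass_def wseqs_Suc_diff
    by (subst sum.reindex) (auto simp: inj_on_def intro!: sum.cong)
  also have "\<dots> = (\<Sum>ls\<in>wseqs n k. ?g ls) + (\<Sum>ls\<in>wseqs (Suc n) k - wseqs n k. ?g ls)"
    by (rule sum_wseqs_Suc)
  also have "(\<Sum>ls\<in>wseqs n k. ?g ls) =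
      (\<Sum>ls\<in>wseqs n k. if d = 0 then 0 else (if sigma ls + (d - 1) = k then wt ls else 0) / real (Suc n))"
    by (rule sum.cong) (auto simp: sigma_Cons_Suc_low dest: sigma_le_if_wseqs)
  also have "\<dots> = (if d = 0 then 0 else distinct_mass n k (d - 1)) / real (Suc n)"
    by (simp add: distinct_mass_def sum_divide_distrib)
  also have "(\<Sum>ls\<in>wseqs (Suc n) k - wseqs n k. ?g ls) = top_distinct_mass n k d / real (Suc n)"
    unfolding top_distinct_mass_def sum_divide_distrib
    by (auto simp: sigma_Cons_Suc_top intro!: sum.cong)
  finally show ?thesis
    by (simp add: add_divide_distrib)
qed

lemma repeat_mass_nonneg: "repeat_mass n k \<ge> 0"
  unfolding repeat_mass_def by (intro sum_nonneg) (auto intro: less_imp_le wt_pos_if_wseqs)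

lemma repeat_mass_0_right [simp]: "repeat_mass n 0 = 0"
  by (simp add: repeat_mass_def)

lemma repeat_mass_0_Suc [simp]: "repeat_mass 0 (Suc k) = 0"
  by (simp add: repeat_mass_def)

lemma repeat_mass_Suc_Suc:
  "repeat_mass (Suc n) (Suc k) =
     repeat_mass n (Suc k) + (repeat_mass n k + (mass (Suc n) k - mass n k)) / real (Suc n)"
proof -
  let ?g = "\<lambda>ls. if sigma (Suc n # ls) = 0 then 0 else wt ls / real (Suc n)"
  have "repeat_mass (Suc n) (Suc k) = repeat_mass n (Suc k) + (\<Sum>ls\<in>wseqs (Suc n) k. ?g ls)"
    unfolding repeat_mass_def sum_wseqs_Suc_Suc wt_Cons by simp
  also have "(\<Sum>ls\<in>wseqs (Suc n) k. ?g ls) =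
      (\<Sum>ls\<in>wseqs n k. ?g ls) + (\<Sum>ls\<in>wseqs (Suc n) k - wseqs n k. ?g ls)"
    by (rule sum_wseqs_Suc)
  also have "(\<Sum>ls\<in>wseqs n k. ?g ls) = repeat_mass n k / real (Suc n)"
    unfolding repeat_mass_def sum_divide_distrib
    by (auto simp: sigma_Cons_Suc_low intro!: sum.cong)
  also have "(\<Sum>ls\<in>wseqs (Suc n) k - wseqs n k. ?g ls) =
      (\<Sum>ls\<in>wseqs (Suc n) k - wseqs n k. wt ls / real (Suc n))"
    by (rule sum.cong) (auto simp: sigma_Cons_Suc_top)
  also have "\<dots> = (mass (Suc n) k - mass n k) / real (Suc n)"
    by (simp add: mass_Suc sum_divide_distrib)
  finally show ?thesis
    by (simp add: add_divide_distrib)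
qed

section \<open>Limits as the length tends to infinity\<close>

lemma LIMSEQ_contraction_zero:
  fixes f v :: "nat \<Rightarrow> real"
  assumes rec: "\<And>k. f (Suc k) = c * f k + v k" and c: "0 \<le> c" "c < 1" and v: "v \<longlonglongrightarrow> 0"
  shows "f \<longlonglongrightarrow> 0"
proof (rule LIMSEQ_I)
  fix r :: real assume r: "0 < r"
  with c have "r * (1 - c) / 2 > 0" by simp
  from LIMSEQ_D[OF v this] obtain N where N: "\<And>k. k \<ge> N \<Longrightarrow> \<bar>v k\<bar> < r * (1 - c) / 2"
    by auto
  have bound: "\<bar>f (N + j)\<bar> \<le> c ^ j * \<bar>f N\<bar> + r / 2" for j
  proof (induction j)
    case (Suc j)
    have "\<bar>f (N + Suc j)\<bar> \<le> c * \<bar>f (N + j)\<bar> + \<bar>v (N + j)\<bar>"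
      using c abs_triangle_ineq[of "c * f (N + j)" "v (N + j)"] by (simp add: rec abs_mult)
    also have "\<dots> \<le> c * (c ^ j * \<bar>f N\<bar> + r / 2) + r * (1 - c) / 2"
      using Suc.IH N[of "N + j"] c by (intro add_mono mult_left_mono) auto
    also have "\<dots> = c ^ Suc j * \<bar>f N\<bar> + r / 2"
      by (simp add: field_simps)
    finally show ?case .
  qed (use r in simp)
  have "(\<lambda>j. c ^ j * \<bar>f N\<bar>) \<longlonglongrightarrow> 0"
    using c tendsto_mult_left_zero[OF LIMSEQ_power_zero[of c]] by simp
  from LIMSEQ_D[OF this, of "r / 2"] r c
  obtain M where M: "\<And>j. j \<ge> M \<Longrightarrow> c ^ j * \<bar>f N\<bar> < r / 2"
    by auto
  have "\<bar>f k\<bar> < r" if "k \<ge> N + M" for k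
    using bound[of "k - N"] M[of "k - N"] that by fastforce
  thus "\<exists>K. \<forall>k\<ge>K. norm (f k - 0) < r"
    by auto
qed

lemma LIMSEQ_affine_recurrence:
  fixes e u :: "nat \<Rightarrow> real"
  assumes "\<And>k. e (Suc k) = c * e k + u k" "0 \<le> c" "c < 1" "u \<longlonglongrightarrow> u0" "l = u0 / (1 - c)"
  shows "e \<longlonglongrightarrow> l"
proof -
  have "(\<lambda>k. e k - l) \<longlonglongrightarrow> 0"
  proof (rule LIMSEQ_contraction_zero)
    show "e (Suc k) - l = c * (e k - l) + (u k - u0)" for k
      using assms by (simp add: field_simps)
    show "(\<lambda>k. u k - u0) \<longlonglongrightarrow> 0"
      using assms(4) by (simp add: LIM_zero)
  qed (use assms in auto)
  thus ?thesis
    by (simp add: LIM_zero_iff)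
qed

lemma top_distinct_mass_0: "top_distinct_mass 0 (Suc k) d = (if d = 1 then 1 else 0)"
  by (induction k) (simp_all add: top_distinct_mass_Suc distinct_mass_0)

lemma LIMSEQ_distinct_mass:
  "(\<lambda>k. distinct_mass (Suc n) k d) \<longlonglongrightarrow> zeta1_shift n d"
proof (induction n arbitrary: d)
  case 0
  have "(\<lambda>k. distinct_mass (Suc 0) (Suc k) d) \<longlonglongrightarrow> zeta1_shift 0 d"
    by (simp add: distinct_mass_Suc top_distinct_mass_0 distinct_mass_0 zeta1_shift_0)
  thus ?case
    by (rule LIMSEQ_imp_Suc)
next
  case (Suc n)
  define c where "c = 1 / real (Suc (Suc n))"
  define z where "z = (if d = 0 then 0 else zeta1_shift n (d - 1))"
  have c: "0 \<le> c" "c < 1"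
    by (auto simp: c_def)
  have "(\<lambda>k. top_distinct_mass (Suc n) k d) \<longlonglongrightarrow> z / real (Suc n)"
  proof (rule LIMSEQ_affine_recurrence[OF _ c])
    show "top_distinct_mass (Suc n) (Suc k) d =
        c * top_distinct_mass (Suc n) k d +
        (if d = 0 then 0 else distinct_mass (Suc n) k (d - 1)) / real (Suc (Suc n))" for k
      by (subst top_distinct_mass_Suc) (simp add: c_def add_divide_distrib)
    show "(\<lambda>k. (if d = 0 then 0 else distinct_mass (Suc n) k (d - 1)) / real (Suc (Suc n)))
        \<longlonglongrightarrow> z / real (Suc (Suc n))"
      unfolding z_def by (cases "d = 0") (auto intro!: tendsto_divide Suc.IH)
    have "1 - c = real (Suc n) / real (Suc (Suc n))"
      by (simp add: c_def field_simps)
    thus "z / real (Suc n) = z / real (Suc (Suc n)) / (1 - c)"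
      by (simp del: of_nat_Suc)
  qed
  with Suc.IH have "(\<lambda>k. distinct_mass (Suc n) k d + top_distinct_mass (Suc n) k d)
      \<longlonglongrightarrow> zeta1_shift n d + z / real (Suc n)"
    by (intro tendsto_add)
  thus ?case
    by (simp add: distinct_mass_Suc zeta1_shift_Suc[of n d] z_def)
qed

lemma LIMSEQ_mass: "(\<lambda>k. mass (Suc n) k) \<longlonglongrightarrow> real (Suc n)"
proof (induction n)
  case (Suc n)
  define c where "c = 1 / real (Suc (Suc n))"
  show ?case
  proof (rule LIMSEQ_affine_recurrence)
    show "mass (Suc (Suc n)) (Suc k) = c * mass (Suc (Suc n)) k + mass (Suc n) (Suc k)" for k
      by (subst mass_Suc_Suc) (simp add: c_def)
    show "(\<lambda>k. mass (Suc n) (Suc k)) \<longlonglongrightarrow> real (Suc n)"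
      using Suc.IH by (rule LIMSEQ_Suc)
    show "real (Suc (Suc n)) = real (Suc n) / (1 - c)"
      by (simp add: c_def field_simps)
  qed (auto simp: c_def)
qed (simp add: mass_1)

section \<open>Limits as the upper bound tends to infinity\<close>

lemma repeat_mass_le: "repeat_mass n (Suc k) \<le> real (Suc k) * mass n k"
proof (induction n arbitrary: k)
  case 0
  thus ?case using mass_nonneg[of 0 k] by simp
next
  case (Suc n)
  show ?case
  proof (cases k)
    case 0
    with Suc.IH[of 0] show ?thesis
      by (simp add: repeat_mass_Suc_Suc)
  next
    case (Suc k')
    define c where "c = 1 / real (Suc n)"
    have c: "0 \<le> c" "c \<le> 1"
      by (auto simp: c_def)
    have mass_diff: "mass (Suc n) k - mass n k = c * mass (Suc n) k'"
      using Suc by (simp add: mass_Suc_Suc c_def)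
    have IH': "repeat_mass n k \<le> real k * mass (Suc n) k'"
      using Suc.IH[of k'] mass_mono[of n k'] unfolding Suc
      by (meson mult_left_mono of_nat_0_le_iff order_trans)
    have "repeat_mass (Suc n) (Suc k) = repeat_mass n (Suc k) + c * (repeat_mass n k + c * mass (Suc n) k')"
      by (simp add: repeat_mass_Suc_Suc mass_diff c_def)
    also have "\<dots> \<le> real (Suc k) * mass n k + c * (real k * mass (Suc n) k' + mass (Suc n) k')"
      using Suc.IH[of k] IH' c mass_nonneg[of "Suc n" k']
      by (intro add_mono mult_left_mono) (auto simp: mult_left_le_one_le)
    also have "\<dots> = real (Suc k) * (mass n k + c * mass (Suc n) k')"
      by (simp add: algebra_simps)
    also have "mass n k + c * mass (Suc n) k' = mass (Suc n) k"
      using mass_diff by simp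
    finally show ?thesis .
  qed
qed

lemma power_diff_le:
  fixes a b :: real
  assumes "0 \<le> b" "b \<le> a"
  shows "a ^ Suc m - b ^ Suc m \<le> real (Suc m) * (a - b) * a ^ m"
proof (induction m)
  case (Suc m)
  have "a ^ Suc (Suc m) - b ^ Suc (Suc m) = a * (a ^ Suc m - b ^ Suc m) + b ^ Suc m * (a - b)"
    by (simp add: algebra_simps)
  also have "\<dots> \<le> a * (real (Suc m) * (a - b) * a ^ m) + a ^ Suc m * (a - b)"
    using assms Suc.IH by (intro add_mono mult_left_mono mult_right_mono power_mono) auto
  also have "\<dots> = real (Suc (Suc m)) * (a - b) * a ^ Suc m"
    by (simp add: algebra_simps)
  finally show ?case .
qed simp

lemma mass_le_harm_power: "mass n k \<le> harm n ^ k"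
proof (induction n arbitrary: k)
  case 0
  thus ?case by (cases k) (simp_all add: harm_expand)
next
  case (Suc n)
  note IH_n = Suc.IH
  define h h' :: real where "h = harm n" and "h' = harm (Suc n)"
  have h': "h' = h + 1 / real (Suc n)" and h: "0 \<le> h"
    by (simp_all add: h_def h'_def harm_Suc inverse_eq_divide harm_nonneg)
  show ?case
  proof (induction k)
    case (Suc k)
    have "mass (Suc n) (Suc k) \<le> h ^ Suc k + h' ^ k / real (Suc n)"
      unfolding mass_Suc_Suc h_def h'_def using IH_n[of "Suc k"] Suc.IH
      by (intro add_mono divide_right_mono) auto
    also have "h ^ Suc k \<le> h * h' ^ k"
      using h h' by (simp add: mult_left_mono power_mono)
    also have "h * h' ^ k + h' ^ k / real (Suc n) = h' ^ Suc k"
      by (simp add: h' algebra_simps)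
    finally show ?case by (simp add: h'_def)
  qed simp
qed

lemma harm_power_div_fact_le_mass: "harm n ^ k / fact k \<le> mass n k"
proof (induction n arbitrary: k)
  case 0
  thus ?case by (cases k) (simp_all add: harm_expand)
next
  case (Suc n)
  note IH_n = Suc.IH
  define h h' :: real where "h = harm n" and "h' = harm (Suc n)"
  have h': "h' = h + 1 / real (Suc n)" and h: "0 \<le> h"
    by (simp_all add: h_def h'_def harm_Suc inverse_eq_divide harm_nonneg)
  show ?case
  proof (induction k)
    case (Suc k)
    have "h' ^ Suc k - h ^ Suc k \<le> real (Suc k) * (1 / real (Suc n)) * h' ^ k"
      using power_diff_le[of h h' k] h h' by simp
    hence "(h' ^ Suc k - h ^ Suc k) / fact (Suc k) \<le> real (Suc k) * (1 / real (Suc n)) * h' ^ k / fact (Suc k)"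
      by (rule divide_right_mono) simp
    also have "\<dots> = h' ^ k / fact k / real (Suc n)"
      by (simp add: fact_Suc field_simps del: of_nat_Suc)
    finally have "h' ^ Suc k / fact (Suc k) \<le> h ^ Suc k / fact (Suc k) + h' ^ k / fact k / real (Suc n)"
      by (simp add: diff_divide_distrib)
    also have "\<dots> \<le> mass (Suc n) (Suc k)"
      unfolding mass_Suc_Suc h_def h'_def using IH_n[of "Suc k"] Suc.IH
      by (intro add_mono divide_right_mono) auto
    finally show ?case by (simp add: h'_def)
  qed simp
qed

lemma mass_pos: "n \<ge> 1 \<Longrightarrow> mass n k > 0"
  using harm_power_div_fact_le_mass[of n k] harm_pos[of n]
  by (metis divide_pos_pos fact_gt_zero order_less_le_trans zero_less_power less_one not_le)

lemma LIMSEQ_distinct_mass_ratio: "(\<lambda>n. distinct_mass n k k / mass n k) \<longlonglongrightarrow> 1"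
proof (cases k)
  case 0
  thus ?thesis by (simp add: distinct_mass_def)
next
  case (Suc k')
  have ratio_le: "repeat_mass n k / mass n k \<le> real k * fact k / harm n" if "n \<ge> 1" for n
  proof -
    have H: "harm n > (0::real)" using that by simp
    have "repeat_mass n k \<le> real k * harm n ^ k'"
      using repeat_mass_le[of n k'] mass_le_harm_power[of n k'] Suc
      by (metis mult_left_mono of_nat_0_le_iff order_trans)
    moreover have "harm n ^ k / fact k \<le> mass n k"
      by (rule harm_power_div_fact_le_mass)
    ultimately have "repeat_mass n k / mass n k \<le> (real k * harm n ^ k') / (harm n ^ k / fact k)"
      using H repeat_mass_nonneg[of n k]
      by (intro frac_le) (auto intro: mult_nonneg_nonneg)
    also have "\<dots> = real k * fact k / harm n"
      using H Suc by (simp add: field_simps del: of_nat_Suc fact_Suc)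
    finally show ?thesis .
  qed
  have upper: "(\<lambda>n. real k * fact k / harm n) \<longlonglongrightarrow> 0"
    by (intro tendsto_divide_0[OF tendsto_const] filterlim_at_top_imp_at_infinity harm_at_top)
  have "\<forall>\<^sub>F n in sequentially. repeat_mass n k / mass n k \<le> real k * fact k / harm n"
    using eventually_ge_at_top[of 1] by (rule eventually_mono) (rule ratio_le)
  moreover have "\<forall>\<^sub>F n in sequentially. 0 \<le> repeat_mass n k / mass n k"
    by (intro always_eventually allI divide_nonneg_nonneg repeat_mass_nonneg mass_nonneg)
  ultimately have "(\<lambda>n. repeat_mass n k / mass n k) \<longlonglongrightarrow> 0"
    by (intro tendsto_sandwich[OF _ _ tendsto_const upper])
  hence "(\<lambda>n. 1 - repeat_mass n k / mass n k) \<longlonglongrightarrow> 1 - 0"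
    by (intro tendsto_diff tendsto_const)
  moreover have "\<forall>\<^sub>F n in sequentially. 1 - repeat_mass n k / mass n k = distinct_mass n k k / mass n k"
    using eventually_ge_at_top[of 1]
  proof (rule eventually_mono)
    fix n :: nat assume "n \<ge> 1"
    hence "mass n k > 0" by (rule mass_pos)
    thus "1 - repeat_mass n k / mass n k = distinct_mass n k k / mass n k"
      by (simp add: mass_eq_distinct_mass_plus_repeat_mass field_simps)
  qed
  ultimately show ?thesis
    by (simp add: tendsto_cong)
qed

lemma theta_coeff_eq: "theta_coeff n k j = (\<Sum>ls\<in>wseqs n k. if sigma ls = j then wt ls else 0)"
  unfolding theta_coeff_def by (simp add: sum.inter_filter)

lemma theta_coeff_nonneg: "theta_coeff n k j \<ge> 0"
  unfolding theta_coeff_eq by (intro sum_nonneg) (auto intro: less_imp_le wt_pos_if_wseqs)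

lemma theta_coeff_eq_0: "j > k \<Longrightarrow> theta_coeff n k j = 0"
  unfolding theta_coeff_eq by (intro sum.neutral) (auto dest: sigma_le_if_wseqs)

lemma sum_theta_coeff: "(\<Sum>j\<le>k. theta_coeff n k j) = mass n k"
  unfolding theta_coeff_def mass_def by (rule sum.group) (auto dest: sigma_le_if_wseqs)

lemma theta_coeff_eq_distinct_mass: "d \<le> k \<Longrightarrow> theta_coeff n k (k - d) = distinct_mass n k d"
  unfolding theta_coeff_eq distinct_mass_def by (intro sum.cong refl) (auto dest: sigma_le_if_wseqs)

lemma pmf_S_pmf:
  assumes "n \<ge> 1"
  shows "pmf (S_pmf n k) j = theta_coeff n k j / mass n k"
proof -
  have pos: "mass n k > 0"
    using assms by (rule mass_pos)
  have "(\<integral>\<^sup>+x. ennreal (theta_coeff n k x / mass n k) \<partial>count_space UNIV) =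
      (\<Sum>x\<le>k. ennreal (theta_coeff n k x / mass n k))"
    by (rule nn_integral_count_space') (auto simp: theta_coeff_eq_0)
  also have "\<dots> = ennreal (\<Sum>x\<le>k. theta_coeff n k x / mass n k)"
    using pos theta_coeff_nonneg by (intro sum_ennreal) simp
  also have "(\<Sum>x\<le>k. theta_coeff n k x / mass n k) = 1"
    using pos by (simp add: sum_divide_distrib[symmetric] sum_theta_coeff)
  finally show ?thesis
    unfolding S_pmf_def theta_1
    using pos theta_coeff_nonneg by (subst pmf_embed_pmf) auto
qed

lemma set_pmf_D_pmf: "set_pmf (D_pmf n) \<subseteq> {..n}"
  by (induction n) (fastforce simp: of_bool_def split: if_splits)+

lemma pmf_bernoulli_shift:
  fixes p :: real
  assumes "0 \<le> p" "p \<le> 1"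
  shows "pmf (bernoulli_pmf p \<bind> (\<lambda>b. return_pmf (s + of_bool b))) l =
    (if l = s then 1 - p else 0) + (if l = Suc s then p else 0)"
proof -
  have "pmf (bernoulli_pmf p \<bind> (\<lambda>b. return_pmf (s + of_bool b))) l =
      (\<Sum>b\<in>UNIV. indicator {l} (s + of_bool b) * pmf (bernoulli_pmf p) b)"
    unfolding pmf_bind pmf_return by (rule integral_measure_pmf_real) auto
  thus ?thesis
    using assms by (simp add: UNIV_bool indicator_def)
qed

lemma pmf_D_pmf_Suc:
  "pmf (D_pmf (Suc n)) l = (1 - 1 / real (Suc n)) * pmf (D_pmf n) l
     + 1 / real (Suc n) * (if l = 0 then 0 else pmf (D_pmf n) (l - 1))"
proof -
  define p where "p = 1 / real (Suc n)"
  have p: "0 \<le> p" "p \<le> 1"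
    by (auto simp: p_def)
  define A where "A = insert l (insert (l - 1) {..n})"
  have A: "finite A" "set_pmf (D_pmf n) \<subseteq> A"
    using set_pmf_D_pmf[of n] by (auto simp: A_def)
  have "pmf (D_pmf (Suc n)) l =
      measure_pmf.expectation (D_pmf n) (\<lambda>s. pmf (bernoulli_pmf p \<bind> (\<lambda>b. return_pmf (s + of_bool b))) l)"
    by (simp add: pmf_bind p_def)
  also have "\<dots> =
      measure_pmf.expectation (D_pmf n) (\<lambda>s. (if l = s then 1 - p else 0) + (if l = Suc s then p else 0))"
    using p by (simp add: pmf_bernoulli_shift)
  also have "\<dots> = (\<Sum>s\<in>A. ((if l = s then 1 - p else 0) + (if l = Suc s then p else 0)) * pmf (D_pmf n) s)"
    using A by (intro integral_measure_pmf_real) auto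
  also have "\<dots> = (\<Sum>s\<in>A. if s = l then (1 - p) * pmf (D_pmf n) s else 0)
      + (\<Sum>s\<in>A. if Suc s = l then p * pmf (D_pmf n) s else 0)"
    unfolding sum.distrib[symmetric] by (rule sum.cong) auto
  also have "\<dots> = (1 - p) * pmf (D_pmf n) l + p * (if l = 0 then 0 else pmf (D_pmf n) (l - 1))"
    using A(1) by (cases l) (simp_all add: sum.delta A_def)
  finally show ?thesis
    by (simp add: p_def)
qed

lemma pmf_D_pmf_Suc_eq_zeta1_shift: "real (Suc n) * pmf (D_pmf (Suc n)) l = zeta1_shift n l"
proof (induction n arbitrary: l)
  case 0
  thus ?case
    by (subst pmf_D_pmf_Suc) (simp add: zeta1_shift_0 indicator_def)
next
  case (Suc n)
  have "m \<noteq> 0 \<Longrightarrow> m * ((1 - 1 / m) * x + 1 / m * z) = (m - 1) * x + z" for m x z :: real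
    by (simp add: field_simps)
  from this[of "real (Suc (Suc n))"]
  have "real (Suc (Suc n)) * pmf (D_pmf (Suc (Suc n))) l =
      real (Suc n) * pmf (D_pmf (Suc n)) l + (if l = 0 then 0 else pmf (D_pmf (Suc n)) (l - 1))"
    by (subst pmf_D_pmf_Suc) (simp del: D_pmf.simps)
  also have "\<dots> = zeta1_shift n l + (if l = 0 then 0 else zeta1_shift n (l - 1)) / real (Suc n)"
    using Suc.IH[of l] Suc.IH[of "l - 1"] by (simp add: field_simps del: D_pmf.simps of_nat_Suc)
  finally show ?case
    by (simp add: zeta1_shift_Suc)
qed

lemma pmf_D_pmf: "l \<ge> 1 \<Longrightarrow> pmf (D_pmf n) l = zeta1 (n - 1) (l - 1) / real n"
proof (cases n)
  case (Suc m)
  assume "l \<ge> 1"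
  thus ?thesis
    using pmf_D_pmf_Suc_eq_zeta1_shift[of m l] unfolding Suc
    by (simp add: zeta1_shift_def field_simps del: D_pmf.simps of_nat_Suc)
qed simp

section \<open>Convergence in distribution\<close>

lemma weak_conv_m_pmf_finite_support:
  fixes p :: "nat \<Rightarrow> real pmf" and q :: "real pmf"
  assumes A: "finite A" "set_pmf q \<subseteq> A"
    and lim: "\<And>a. a \<in> A \<Longrightarrow> (\<lambda>k. pmf (p k) a) \<longlonglongrightarrow> pmf q a"
  shows "weak_conv_m (\<lambda>k. measure_pmf (p k)) (measure_pmf q)"
  unfolding weak_conv_m_def weak_conv_def cdf_def
proof (intro allI impI)
  fix x :: real
  define B where "B = {..x} \<inter> A"
  have B: "finite B" "B \<subseteq> A"
    using A by (auto simp: B_def)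
  have "measure q {..x} = measure q ({..x} \<inter> set_pmf q)"
    by (simp add: measure_Int_set_pmf)
  also have "{..x} \<inter> set_pmf q = B \<inter> set_pmf q"
    using A by (auto simp: B_def)
  also have "measure q \<dots> = (\<Sum>a\<in>B. pmf q a)"
    using B by (simp add: measure_Int_set_pmf measure_measure_pmf_finite)
  finally have q_cdf: "measure q {..x} = (\<Sum>a\<in>B. pmf q a)" .
  have lim_B: "(\<lambda>k. \<Sum>a\<in>B. pmf (p k) a) \<longlonglongrightarrow> (\<Sum>a\<in>B. pmf q a)"
    using B by (intro tendsto_sum lim) auto
  have "(\<lambda>k. \<Sum>a\<in>A. pmf (p k) a) \<longlonglongrightarrow> 1"
    using tendsto_sum[of A "\<lambda>a k. pmf (p k) a", OF lim] sum_pmf_eq_1[OF A] by simp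
  hence "(\<lambda>k. (\<Sum>a\<in>B. pmf (p k) a) + (1 - (\<Sum>a\<in>A. pmf (p k) a))) \<longlonglongrightarrow> (\<Sum>a\<in>B. pmf q a) + (1 - 1)"
    by (intro tendsto_add lim_B tendsto_diff tendsto_const)
  hence upper: "(\<lambda>k. (\<Sum>a\<in>B. pmf (p k) a) + (1 - (\<Sum>a\<in>A. pmf (p k) a))) \<longlonglongrightarrow> (\<Sum>a\<in>B. pmf q a)"
    by simp
  have "(\<Sum>a\<in>B. pmf (p k) a) \<le> measure (p k) {..x}" for k
    using B by (simp add: measure_measure_pmf_finite[symmetric] B_def measure_pmf.finite_measure_mono)
  moreover have "measure (p k) {..x} \<le> (\<Sum>a\<in>B. pmf (p k) a) + (1 - (\<Sum>a\<in>A. pmf (p k) a))" for k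
  proof -
    have "measure (p k) {..x} = measure (p k) B + measure (p k) ({..x} - A)"
      by (subst measure_pmf.finite_measure_Union[symmetric]) (auto simp: B_def intro: arg_cong2)
    also have "measure (p k) ({..x} - A) \<le> measure (p k) (UNIV - A)"
      by (intro measure_pmf.finite_measure_mono) auto
    also have "measure (p k) (UNIV - A) = 1 - measure (p k) A"
      using measure_pmf.prob_compl[of A "p k"] by simp
    finally show ?thesis
      using A B by (simp add: measure_measure_pmf_finite)
  qed
  ultimately show "(\<lambda>k. measure (p k) {..x}) \<longlonglongrightarrow> measure q {..x}"
    unfolding q_cdf by (intro tendsto_sandwich[OF _ _ lim_B upper] always_eventually allI)
qed

lemma LIMSEQ_pmf_length_minus_S:
  assumes "n \<ge> 1"
  shows "(\<lambda>k. pmf (map_pmf (\<lambda>j. real k - real j) (S_pmf n k)) (real d))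
    \<longlonglongrightarrow> pmf (map_pmf real (D_pmf n)) (real d)"
proof -
  obtain m where m: "n = Suc m"
    using assms by (cases n) auto
  have "pmf (map_pmf real (D_pmf n)) (real d) = zeta1_shift m d / real n"
    using pmf_D_pmf_Suc_eq_zeta1_shift[of m d] unfolding m
    by (simp add: pmf_map_inj' field_simps del: D_pmf.simps of_nat_Suc)
  moreover have "(\<lambda>k. distinct_mass n k d / mass n k) \<longlonglongrightarrow> zeta1_shift m d / real n"
    unfolding m by (intro tendsto_divide LIMSEQ_distinct_mass LIMSEQ_mass) auto
  moreover have "\<forall>\<^sub>F k in sequentially.
      distinct_mass n k d / mass n k = pmf (map_pmf (\<lambda>j. real k - real j) (S_pmf n k)) (real d)"
    using eventually_ge_at_top[of d]
  proof (rule eventually_mono)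
    fix k assume "d \<le> k"
    hence "pmf (map_pmf (\<lambda>j. real k - real j) (S_pmf n k)) (real d) = pmf (S_pmf n k) (k - d)"
      using pmf_map_inj'[of "\<lambda>j. real k - real j" "S_pmf n k" "k - d"] by (simp add: inj_on_def)
    also have "\<dots> = distinct_mass n k d / mass n k"
      using \<open>d \<le> k\<close> assms by (simp add: pmf_S_pmf theta_coeff_eq_distinct_mass)
    finally show "distinct_mass n k d / mass n k =
        pmf (map_pmf (\<lambda>j. real k - real j) (S_pmf n k)) (real d)" ..
  qed
  ultimately show ?thesis
    by (simp add: Lim_transform_eventually)
qed

lemma weak_conv_length_minus_S:
  "n \<ge> 1 \<Longrightarrow> weak_conv_m (\<lambda>k. measure_pmf (map_pmf (\<lambda>j. real k - real j) (S_pmf n k)))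
    (measure_pmf (map_pmf real (D_pmf n)))"
  using set_pmf_D_pmf[of n]
  by (intro weak_conv_m_pmf_finite_support[where A = "real ` {..n}"])
    (auto simp: LIMSEQ_pmf_length_minus_S)

lemma weak_conv_S: "weak_conv_m (\<lambda>n. measure_pmf (map_pmf real (S_pmf n k))) (measure_pmf (return_pmf 0))"
proof (rule weak_conv_m_pmf_finite_support[where A = "{0}"])
  have "\<forall>\<^sub>F n in sequentially. distinct_mass n k k / mass n k = pmf (map_pmf real (S_pmf n k)) 0"
    using eventually_ge_at_top[of 1]
  proof (rule eventually_mono)
    fix n :: nat assume "n \<ge> 1"
    thus "distinct_mass n k k / mass n k = pmf (map_pmf real (S_pmf n k)) 0"
      using pmf_map_inj'[of real "S_pmf n k" 0]
      by (simp add: pmf_S_pmf theta_coeff_eq_distinct_mass[of k k, simplified])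
  qed
  with LIMSEQ_distinct_mass_ratio[of k]
  show "(\<lambda>n. pmf (map_pmf real (S_pmf n k)) a) \<longlonglongrightarrow> pmf (return_pmf 0) a" if "a \<in> {0}" for a
    using that by (simp add: Lim_transform_eventually)
qed auto

theorem mainTheorem14:
  shows "(\<forall>n::nat. n \<ge> 1 \<longrightarrow>
            weak_conv_m (\<lambda>k. measure_pmf (map_pmf (\<lambda>j. real k - real j) (S_pmf n k)))
                        (measure_pmf (map_pmf real (D_pmf n)))
          \<and> (\<forall>l::nat. 1 \<le> l \<and> l \<le> n \<longrightarrow> pmf (D_pmf n) l = zeta1 (n - 1) (l - 1) / real n))
       \<and> (\<forall>k::nat. k \<ge> 1 \<longrightarrow>
            weak_conv_m (\<lambda>n. measure_pmf (map_pmf real (S_pmf n k))) (measure_pmf (return_pmf (0::real))))"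
  using weak_conv_length_minus_S pmf_D_pmf weak_conv_S by blast

end
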